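(* Let $X=\{x_j\mid j\in J\}$ be a set and $\tilde q$ a symbol not in $X$. Let $V$ be the $\mathbf{k}$-vector space with basis $X\cup\{\tilde q\}$, $T(V)$ its tensor algebra, and $I$ the two-sided ideal of $T(V)$ generated by $\{\tilde q\otimes\tilde q-\tilde q\}\cup\{\tilde q\otimes a\otimes\tilde q-\tilde q\otimes a\mid a\in T(V)\}$. Let $\hat A:=T(V)/I$, $\hat q:=\tilde q+I$, and define $\hat i:X\to(\hat A,\hat q)$ by $\hat i(x_j)=x_j+I$. Then $((\hat A,\hat q),\hat i)$ is the free invariant algebra generated by $X$: for every invariant algebra $(A,q)$ and every map $\theta:X\to(A,q)$ there is a unique invariant homomorphism $\hat\theta:(\hat A,\hat q)\to(A,q)$ with $\hat\theta\circ\hat i=\theta$.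
   Context: All associative algebras have an identity. For an associative algebra $A$ with idempotent $q$, the invariant algebra is $(A,q):=\{x\in A\mid qxq=qx\}$ (a subalgebra containing $1$ and $q$). For invariant algebras $(A,q_A),(B,q_B)$, an invariant homomorphism is a linear map $\phi$ with $\phi(xy)=\phi(x)\phi(y)$, $\phi(1_A)=1_B$, $\phi(q_A)=q_B$. *)

theory Defs
  imports "HOL-Algebra.QuotRing"
begin

definition kalg :: "('a, 'm) ring_scheme \<Rightarrow> ('k::field \<Rightarrow> 'a \<Rightarrow> 'a) \<Rightarrow> bool" where
  "kalg A s \<longleftrightarrow> ring A \<and>
     (\<forall>c. \<forall>x\<in>carrier A. s c x \<in> carrier A) \<and>
     (\<forall>c d. \<forall>x\<in>carrier A. s (c + d) x = s c x \<oplus>\<^bsub>A\<^esub> s d x) \<and>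
     (\<forall>c. \<forall>x\<in>carrier A. \<forall>y\<in>carrier A. s c (x \<oplus>\<^bsub>A\<^esub> y) = s c x \<oplus>\<^bsub>A\<^esub> s c y) \<and>
     (\<forall>c d. \<forall>x\<in>carrier A. s (c * d) x = s c (s d x)) \<and>
     (\<forall>x\<in>carrier A. s 1 x = x) \<and>
     (\<forall>c. \<forall>x\<in>carrier A. \<forall>y\<in>carrier A.
        s c (x \<otimes>\<^bsub>A\<^esub> y) = s c x \<otimes>\<^bsub>A\<^esub> y \<and> s c (x \<otimes>\<^bsub>A\<^esub> y) = x \<otimes>\<^bsub>A\<^esub> s c y)"

text \<open>An invariant algebra (A,q): a k-algebra A with an idempotent q.
  Its carrier is the subalgebra {x. q x q = q x}.\<close>
definition inv_alg :: "('a, 'm) ring_scheme \<Rightarrow> ('k::field \<Rightarrow> 'a \<Rightarrow> 'a) \<Rightarrow> 'a \<Rightarrow> bool" where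
  "inv_alg A s q \<longleftrightarrow> kalg A s \<and> q \<in> carrier A \<and> q \<otimes>\<^bsub>A\<^esub> q = q"

definition inv_carrier :: "('a, 'm) ring_scheme \<Rightarrow> 'a \<Rightarrow> 'a set" where
  "inv_carrier A q = {x \<in> carrier A. q \<otimes>\<^bsub>A\<^esub> x \<otimes>\<^bsub>A\<^esub> q = q \<otimes>\<^bsub>A\<^esub> x}"

definition inv_hom ::
  "('a, 'm) ring_scheme \<Rightarrow> ('k::field \<Rightarrow> 'a \<Rightarrow> 'a) \<Rightarrow> 'a \<Rightarrow>
   ('b, 'n) ring_scheme \<Rightarrow> ('k \<Rightarrow> 'b \<Rightarrow> 'b) \<Rightarrow> 'b \<Rightarrow> ('a \<Rightarrow> 'b) \<Rightarrow> bool" where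
  "inv_hom A sA qA B sB qB \<phi> \<longleftrightarrow>
     \<phi> \<in> inv_carrier A qA \<rightarrow> inv_carrier B qB \<and>
     (\<forall>x\<in>inv_carrier A qA. \<forall>y\<in>inv_carrier A qA. \<phi> (x \<oplus>\<^bsub>A\<^esub> y) = \<phi> x \<oplus>\<^bsub>B\<^esub> \<phi> y) \<and>
     (\<forall>c. \<forall>x\<in>inv_carrier A qA. \<phi> (sA c x) = sB c (\<phi> x)) \<and>
     (\<forall>x\<in>inv_carrier A qA. \<forall>y\<in>inv_carrier A qA. \<phi> (x \<otimes>\<^bsub>A\<^esub> y) = \<phi> x \<otimes>\<^bsub>B\<^esub> \<phi> y) \<and>
     \<phi> \<one>\<^bsub>A\<^esub> = \<one>\<^bsub>B\<^esub> \<and>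
     \<phi> qA = qB"

text \<open>Letters: Some x stands for x \<in> X, None stands for the extra symbol q~.
  T(V) is realised as the free associative algebra on these letters: finitely supported
  k-valued functions on words, with concatenation-convolution product.\<close>

definition tens_carrier :: "'x set \<Rightarrow> ('x option list \<Rightarrow> 'k::field) set" where
  "tens_carrier X = {f. finite {w. f w \<noteq> 0} \<and>
                        (\<forall>w. f w \<noteq> 0 \<longrightarrow> set w \<subseteq> Some ` X \<union> {None})}"

definition tens_alg :: "'x set \<Rightarrow> ('x option list \<Rightarrow> 'k::field) ring" where
  "tens_alg X = \<lparr> carrier = tens_carrier X,
       mult = (\<lambda>f g w. \<Sum>i\<in>{0..length w}. f (take i w) * g (drop i w)),
       one = (\<lambda>w. if w = [] then 1 else 0),
       zero = (\<lambda>w. 0),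
       add = (\<lambda>f g w. f w + g w) \<rparr>"

definition tens_smult :: "'k::field \<Rightarrow> ('x option list \<Rightarrow> 'k) \<Rightarrow> ('x option list \<Rightarrow> 'k)" where
  "tens_smult c f = (\<lambda>w. c * f w)"

definition letter :: "'x option \<Rightarrow> ('x option list \<Rightarrow> 'k::field)" where
  "letter a = (\<lambda>w. if w = [a] then 1 else 0)"

definition inv_ideal :: "'x set \<Rightarrow> ('x option list \<Rightarrow> 'k::field) set" where
  "inv_ideal X = genideal (tens_alg X)
     ({letter None \<otimes>\<^bsub>tens_alg X\<^esub> letter None \<ominus>\<^bsub>tens_alg X\<^esub> letter None} \<union>
      {letter None \<otimes>\<^bsub>tens_alg X\<^esub> a \<otimes>\<^bsub>tens_alg X\<^esub> letter None
         \<ominus>\<^bsub>tens_alg X\<^esub> letter None \<otimes>\<^bsub>tens_alg X\<^esub> a | a. a \<in> carrier (tens_alg X)})"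

definition hatA :: "'x set \<Rightarrow> ('x option list \<Rightarrow> 'k::field) set ring" where
  "hatA X = tens_alg X Quot inv_ideal X"

definition hat_smult :: "'x set \<Rightarrow> 'k::field \<Rightarrow> ('x option list \<Rightarrow> 'k) set \<Rightarrow> ('x option list \<Rightarrow> 'k) set" where
  "hat_smult X c C = inv_ideal X +>\<^bsub>tens_alg X\<^esub> tens_smult c (SOME a. a \<in> C)"

definition hat_q :: "'x set \<Rightarrow> ('x option list \<Rightarrow> 'k::field) set" where
  "hat_q X = inv_ideal X +>\<^bsub>tens_alg X\<^esub> letter None"

definition hat_i :: "'x set \<Rightarrow> 'x \<Rightarrow> ('x option list \<Rightarrow> 'k::field) set" where
  "hat_i X x = inv_ideal X +>\<^bsub>tens_alg X\<^esub> letter (Some x)"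

end

theory Submission
  imports Defs
begin

text \<open>Every element of the quotient \<open>hatA X\<close> is a linear combination of images of words
  in the letters \<open>X \<union> {q~}\<close>, and the relations \<open>q~ a q~ = q~ a\<close> make its invariant
  subalgebra the whole algebra; so invariant homomorphisms out of it are just unital k-algebra
  homomorphisms sending \<open>hat_q X\<close> to \<open>q\<close>. For existence, evaluate words in \<open>A\<close> by
  \<open>q~ \<mapsto> q\<close> and \<open>x \<mapsto> \<theta> x\<close>: all values lie in the subalgebra \<open>inv_carrier A q\<close>,
  so both families of generators of the ideal evaluate to \<open>\<zero>\<close> and the evaluation factors
  through the quotient. For uniqueness, two such homomorphisms agree on letters, hence on
  words, hence everywhere by linearity.\<close>

section \<open>Convolution of coefficient functions on words\<close>

definition conv :: "('a list \<Rightarrow> 'k::comm_semiring_1) \<Rightarrow> ('a list \<Rightarrow> 'k) \<Rightarrow> 'a list \<Rightarrow> 'k" where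
  "conv f g w = (\<Sum>i\<in>{0..length w}. f (take i w) * g (drop i w))"

definition splits :: "'a list \<Rightarrow> ('a list \<times> 'a list) set" where
  "splits w = {(u, v). u @ v = w}"

lemma splits_eq: "splits w = (\<lambda>i. (take i w, drop i w)) ` {0..length w}"
proof
  show "splits w \<subseteq> (\<lambda>i. (take i w, drop i w)) ` {0..length w}"
  proof
    fix p assume "p \<in> splits w"
    then obtain u v where "p = (u, v)" "u @ v = w" by (auto simp: splits_def)
    then show "p \<in> (\<lambda>i. (take i w, drop i w)) ` {0..length w}"
      by (intro image_eqI[where x = "length u"]) auto
  qed
qed (auto simp: splits_def)

lemma finite_splits [simp]: "finite (splits w)"
  by (simp add: splits_eq)

lemma conv_splits: "conv f g w = (\<Sum>(u, v)\<in>splits w. f u * g v)"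
proof -
  have "inj_on (\<lambda>i. (take i w, drop i w)) {0..length w}"
    by (intro inj_onI) (auto simp: min_def split: if_splits dest: arg_cong[of _ _ length])
  then show ?thesis
    by (simp add: conv_def splits_eq sum.reindex)
qed

lemma conv_assoc: "conv (conv f g) h = conv f (conv g h)"
proof
  fix w
  have "conv (conv f g) h w = (\<Sum>a\<in>splits w. \<Sum>b\<in>splits (fst a). f (fst b) * g (snd b) * h (snd a))"
    by (simp add: conv_splits sum_distrib_right case_prod_beta)
  also have "\<dots> = (\<Sum>(a, b)\<in>Sigma (splits w) (\<lambda>a. splits (fst a)). f (fst b) * g (snd b) * h (snd a))"
    by (rule sum.Sigma) auto
  also have "\<dots> = (\<Sum>t\<in>{(u, v, z). u @ v @ z = w}. f (fst t) * g (fst (snd t)) * h (snd (snd t)))"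
    by (rule sum.reindex_bij_witness[where i = "\<lambda>(u, v, z). ((u @ v, z), (u, v))"
          and j = "\<lambda>((a, z), (u, v)). (u, v, z)"]) (auto simp: splits_def)
  also have "\<dots> = (\<Sum>(a, b)\<in>Sigma (splits w) (\<lambda>a. splits (snd a)). f (fst a) * g (fst b) * h (snd b))"
    by (rule sum.reindex_bij_witness[where i = "\<lambda>((u, a), (v, z)). (u, v, z)"
          and j = "\<lambda>(u, v, z). ((u, v @ z), (v, z))"]) (auto simp: splits_def)
  also have "\<dots> = (\<Sum>a\<in>splits w. \<Sum>b\<in>splits (snd a). f (fst a) * g (fst b) * h (snd b))"
    by (rule sum.Sigma[symmetric]) auto
  also have "\<dots> = conv f (conv g h) w"
    by (simp add: conv_splits sum_distrib_left case_prod_beta mult.assoc)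
  finally show "conv (conv f g) h w = conv f (conv g h) w" .
qed

lemma conv_nonzeroE:
  assumes "conv f g w \<noteq> 0"
  obtains u v where "u @ v = w" "f u \<noteq> 0" "g v \<noteq> 0"
proof -
  have "(\<Sum>(u, v)\<in>splits w. f u * g v) \<noteq> 0"
    using assms by (simp add: conv_splits)
  then obtain p where "p \<in> splits w" "(case p of (u, v) \<Rightarrow> f u * g v) \<noteq> 0"
    by (rule sum.not_neutral_contains_not_neutral)
  with that show thesis by (force simp: splits_def)
qed

definition word :: "'a list \<Rightarrow> 'a list \<Rightarrow> 'k::comm_semiring_1" where
  "word u = (\<lambda>v. if v = u then 1 else 0)"

lemma conv_word_left_Nil [simp]: "conv (word []) f = f"
proof
  fix w
  have "conv (word []) f w = (\<Sum>p\<in>splits w. if p = ([], w) then f w else 0)"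
    unfolding conv_splits by (rule sum.cong) (auto simp: splits_def word_def split: if_splits)
  also have "\<dots> = f w" using finite_splits[of w] by (subst sum.delta) (auto simp: splits_def)
  finally show "conv (word []) f w = f w" .
qed

lemma conv_word_right_Nil [simp]: "conv f (word []) = f"
proof
  fix w
  have "conv f (word []) w = (\<Sum>p\<in>splits w. if p = (w, []) then f w else 0)"
    unfolding conv_splits by (rule sum.cong) (auto simp: splits_def word_def split: if_splits)
  also have "\<dots> = f w" using finite_splits[of w] by (subst sum.delta) (auto simp: splits_def)
  finally show "conv f (word []) w = f w" .
qed

lemma conv_word: "conv (word u) (word v) = word (u @ v)"
proof
  fix w
  have "conv (word u) (word v) w = (\<Sum>p\<in>splits w. if p = (u, v) then 1 else 0)"
    unfolding conv_splits by (rule sum.cong) (auto simp: word_def split: if_splits)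
  also have "\<dots> = word (u @ v) w"
    using finite_splits[of w] by (subst sum.delta) (auto simp: splits_def word_def)
  finally show "conv (word u) (word v) w = word (u @ v) w" .
qed

lemma conv_add_left: "conv (\<lambda>w. f w + g w) h = (\<lambda>w. conv f h w + conv g h w)"
  by (rule ext) (simp add: conv_def distrib_right sum.distrib)

lemma conv_add_right: "conv h (\<lambda>w. f w + g w) = (\<lambda>w. conv h f w + conv h g w)"
  by (rule ext) (simp add: conv_def distrib_left sum.distrib)

lemma conv_smult_left: "conv (\<lambda>w. c * f w) h = (\<lambda>w. c * conv f h w)"
  by (rule ext) (simp add: conv_def sum_distrib_left mult.assoc)

lemma conv_smult_right: "conv h (\<lambda>w. c * f w) = (\<lambda>w. c * conv h f w)"
  by (rule ext) (simp add: conv_def sum_distrib_left mult.left_commute)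

lemma conv_zero_left [simp]: "conv (\<lambda>w. 0) g = (\<lambda>w. 0)"
  by (simp add: conv_def[abs_def])

lemma conv_zero_right [simp]: "conv g (\<lambda>w. 0) = (\<lambda>w. 0)"
  by (simp add: conv_def[abs_def])

section \<open>The tensor algebra as a ring\<close>

lemma letter_eq_word: "letter a = word [a]"
  by (simp add: letter_def word_def)

lemma word_Cons: "word (a # u) = conv (letter a) (word u)"
  by (simp add: letter_eq_word conv_word)

lemma tens_alg_simps:
  "carrier (tens_alg X) = tens_carrier X"
  "mult (tens_alg X) = conv"
  "one (tens_alg X) = word []"
  "zero (tens_alg X) = (\<lambda>w. 0)"
  "add (tens_alg X) = (\<lambda>f g w. f w + g w)"
  by (auto simp: tens_alg_def conv_def[abs_def] word_def[abs_def])

definition supp :: "('a \<Rightarrow> 'k::zero) \<Rightarrow> 'a set" where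
  "supp f = {w. f w \<noteq> 0}"

abbreviation letters :: "'x set \<Rightarrow> 'x option set" where
  "letters X \<equiv> Some ` X \<union> {None}"

lemma tens_carrier_iff:
  "f \<in> tens_carrier X \<longleftrightarrow> finite (supp f) \<and> (\<forall>w. f w \<noteq> 0 \<longrightarrow> set w \<subseteq> letters X)"
  by (simp add: tens_carrier_def supp_def)

lemma supp_add: "supp (\<lambda>w. f w + g w :: 'k::monoid_add) \<subseteq> supp f \<union> supp g"
  by (auto simp: supp_def)

lemma tens_conv_closed:
  assumes "f \<in> tens_carrier X" "g \<in> tens_carrier X"
  shows "conv f g \<in> tens_carrier X"
proof -
  have "supp (conv f g) \<subseteq> (\<lambda>(u, v). u @ v) ` (supp f \<times> supp g)"
  proof
    fix w assume "w \<in> supp (conv f g)"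
    then obtain u v where "u @ v = w" "f u \<noteq> 0" "g v \<noteq> 0"
      by (auto simp: supp_def elim: conv_nonzeroE)
    then show "w \<in> (\<lambda>(u, v). u @ v) ` (supp f \<times> supp g)"
      by (intro image_eqI[of _ _ "(u, v)"]) (auto simp: supp_def)
  qed
  moreover have "finite ((\<lambda>(u, v). u @ v) ` (supp f \<times> supp g))"
    using assms by (simp add: tens_carrier_iff)
  ultimately have "finite (supp (conv f g))"
    by (rule finite_subset)
  moreover have "set w \<subseteq> letters X" if nonzero: "conv f g w \<noteq> 0" for w
  proof -
    obtain u v where "u @ v = w" "f u \<noteq> 0" "g v \<noteq> 0"
      by (rule conv_nonzeroE[OF nonzero])
    with assms show ?thesis unfolding tens_carrier_iff by (metis set_append Un_subset_iff)
  qed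
  ultimately show ?thesis by (simp add: tens_carrier_iff)
qed

lemma tens_add_closed:
  assumes "f \<in> tens_carrier X" "g \<in> tens_carrier X"
  shows "(\<lambda>w. f w + g w) \<in> tens_carrier X"
proof -
  have "finite (supp (\<lambda>w. f w + g w))"
    using assms by (intro finite_subset[OF supp_add]) (simp add: tens_carrier_iff)
  moreover have "set w \<subseteq> letters X" if "f w + g w \<noteq> 0" for w
    using that assms unfolding tens_carrier_iff by (metis add.left_neutral add_0_right)
  ultimately show ?thesis unfolding tens_carrier_iff by blast
qed

lemma tens_smult_closed:
  assumes "f \<in> tens_carrier X"
  shows "(\<lambda>w. c * f w) \<in> tens_carrier X"
proof -
  have "supp (\<lambda>w. c * f w) \<subseteq> supp f"
    by (auto simp: supp_def)
  with assms show ?thesis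
    unfolding tens_carrier_iff by (auto intro: finite_subset)
qed

lemma word_closed: "set u \<subseteq> letters X \<Longrightarrow> word u \<in> tens_carrier X"
  by (auto simp: tens_carrier_iff supp_def word_def split: if_splits)

lemma letter_closed: "a \<in> letters X \<Longrightarrow> letter a \<in> tens_carrier X"
  by (simp add: letter_eq_word word_closed)

lemma tens_zero_closed: "(\<lambda>w. 0) \<in> tens_carrier X"
  by (simp add: tens_carrier_iff supp_def)

lemmas tens_closed = tens_add_closed tens_smult_closed tens_conv_closed word_closed letter_closed

lemma ring_tens_alg: "ring (tens_alg X)"
proof (rule ringI)
  show "abelian_group (tens_alg X)"
  proof (rule abelian_groupI, unfold tens_alg_simps)
    fix f assume "f \<in> tens_carrier X"
    then have "(\<lambda>w. (-1) * f w) \<in> tens_carrier X"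
      by (rule tens_smult_closed)
    then show "\<exists>g\<in>tens_carrier X. (\<lambda>w. g w + f w) = (\<lambda>w. 0)"
      by (intro bexI[of _ "\<lambda>w. (-1) * f w"]) auto
  qed (simp_all add: tens_add_closed tens_zero_closed ac_simps)
  show "monoid (tens_alg X)"
    by (rule monoidI, unfold tens_alg_simps) (simp_all add: tens_conv_closed word_closed conv_assoc)
qed (simp_all add: tens_alg_simps conv_add_left conv_add_right)

lemma tens_alg_diff:
  assumes "f \<in> tens_carrier X" "g \<in> tens_carrier X"
  shows "f \<ominus>\<^bsub>tens_alg X\<^esub> g = (\<lambda>w. f w - g w)"
proof -
  interpret ring "tens_alg X" by (rule ring_tens_alg)
  have "\<ominus>\<^bsub>tens_alg X\<^esub> g = (\<lambda>w. - g w)"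
    using assms(2) tens_smult_closed[OF assms(2), of "-1"]
    by (intro minus_equality) (simp_all add: tens_alg_simps)
  then show ?thesis by (simp add: a_minus_def tens_alg_simps)
qed

lemma tens_carrier_induct [consumes 1, case_names zero step]:
  fixes f :: "'x option list \<Rightarrow> 'k::field"
  assumes f: "f \<in> tens_carrier X"
    and zero: "P (\<lambda>w. 0)"
    and step: "\<And>g c u. g \<in> tens_carrier X \<Longrightarrow> set u \<subseteq> letters X \<Longrightarrow> P g \<Longrightarrow>
      P (\<lambda>v. g v + c * word u v)"
  shows "P f"
proof -
  have "\<forall>f. f \<in> tens_carrier X \<longrightarrow> supp f \<subseteq> S \<longrightarrow> P f" if "finite S" for S
    using that
  proof (induction S rule: finite_induct)
    case empty
    then show ?case
      using zero by (auto simp: supp_def)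
  next
    case (insert u S)
    show ?case
    proof (intro allI impI)
      fix f :: "'x option list \<Rightarrow> 'k" assume fc: "f \<in> tens_carrier X" and sf: "supp f \<subseteq> insert u S"
      show "P f"
      proof (cases "f u = 0")
        case True
        then have "supp f \<subseteq> S" using sf by (auto simp: supp_def)
        with insert.IH fc show ?thesis by blast
      next
        case False
        define g where "g = f(u := 0)"
        have "supp g \<subseteq> S" "supp g \<subseteq> supp f"
          using sf by (auto simp: supp_def g_def)
        with fc have gc: "g \<in> tens_carrier X"
          by (auto simp: tens_carrier_iff g_def intro: finite_subset)
        have "P (\<lambda>v. g v + f u * word u v)"
          using False fc gc \<open>supp g \<subseteq> S\<close> insert.IH by (intro step) (auto simp: tens_carrier_iff)
        moreover have "(\<lambda>v. g v + f u * word u v) = f"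
          by (auto simp: g_def word_def)
        ultimately show ?thesis by simp
      qed
    qed
  qed
  with f show ?thesis by (auto simp: tens_carrier_iff)
qed


section \<open>Algebra homomorphisms out of the tensor algebra\<close>

definition kalg_hom ::
  "('a, 'm) ring_scheme \<Rightarrow> ('k \<Rightarrow> 'a \<Rightarrow> 'a) \<Rightarrow> ('b, 'n) ring_scheme \<Rightarrow> ('k \<Rightarrow> 'b \<Rightarrow> 'b) \<Rightarrow>
   ('a \<Rightarrow> 'b) \<Rightarrow> bool" where
  "kalg_hom R sR S sS h \<longleftrightarrow> h \<in> ring_hom R S \<and> (\<forall>c. \<forall>x\<in>carrier R. h (sR c x) = sS c (h x))"

lemma kalg_hom_comp:
  "kalg_hom R sR S sS f \<Longrightarrow> kalg_hom S sS T sT g \<Longrightarrow> kalg_hom R sR T sT (g \<circ> f)"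
  by (auto simp: kalg_hom_def ring_hom_trans ring_hom_closed)

locale kalgebra =
  fixes A :: "('a, 'm) ring_scheme" (structure) and s :: "'k::field \<Rightarrow> 'a \<Rightarrow> 'a"
  assumes kalg: "kalg A s"

sublocale kalgebra \<subseteq> ring A
  using kalg by (simp add: kalg_def)

context kalgebra
begin

lemma scalar_closed [simp]: "x \<in> carrier A \<Longrightarrow> s c x \<in> carrier A"
  using kalg by (simp add: kalg_def)

lemma scalar_add_left: "x \<in> carrier A \<Longrightarrow> s (c + d) x = s c x \<oplus> s d x"
  using kalg by (simp add: kalg_def)

lemma scalar_add_right: "x \<in> carrier A \<Longrightarrow> y \<in> carrier A \<Longrightarrow> s c (x \<oplus> y) = s c x \<oplus> s c y"
  using kalg by (simp add: kalg_def)

lemma scalar_scalar: "x \<in> carrier A \<Longrightarrow> s (c * d) x = s c (s d x)"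
  using kalg by (simp add: kalg_def)

lemma scalar_mult_left: "x \<in> carrier A \<Longrightarrow> y \<in> carrier A \<Longrightarrow> s c (x \<otimes> y) = s c x \<otimes> y"
  using kalg by (simp add: kalg_def)

lemma scalar_mult_right: "x \<in> carrier A \<Longrightarrow> y \<in> carrier A \<Longrightarrow> s c (x \<otimes> y) = x \<otimes> s c y"
  using kalg unfolding kalg_def by blast

lemma scalar_one [simp]: "x \<in> carrier A \<Longrightarrow> s 1 x = x"
  using kalg by (simp add: kalg_def)

lemma scalar_zero_left [simp]: "x \<in> carrier A \<Longrightarrow> s 0 x = \<zero>"
proof -
  assume x: "x \<in> carrier A"
  have "s 0 x \<oplus> s 0 x = s 0 x"
    using scalar_add_left[OF x, of 0 0] by simp
  with x show ?thesis
    using add.l_cancel_one[of "s 0 x" "s 0 x"] by simp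
qed

lemma scalar_zero_right [simp]: "s c \<zero> = \<zero>"
proof -
  have "s c \<zero> \<oplus> s c \<zero> = s c \<zero>"
    using scalar_add_right[of \<zero> \<zero> c] by simp
  then show ?thesis
    using add.l_cancel_one[of "s c \<zero>" "s c \<zero>"] by simp
qed

lemma scalar_finsum:
  assumes "F \<in> S \<rightarrow> carrier A"
  shows "s c (finsum A F S) = (\<Oplus>w\<in>S. s c (F w))"
  using assms
  by (induction S rule: infinite_finite_induct) (simp_all add: finsum_insert scalar_add_right Pi_def)

lemma tens_alg_hom_eqI:
  fixes F G :: "('x option list \<Rightarrow> 'k) \<Rightarrow> 'a"
  assumes F: "kalg_hom (tens_alg X) tens_smult A s F" and G: "kalg_hom (tens_alg X) tens_smult A s G"
    and on_letters: "\<And>a. a \<in> letters X \<Longrightarrow> F (letter a) = G (letter a)"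
    and f: "f \<in> tens_carrier X"
  shows "F f = G f"
proof -
  have hom: "F \<in> ring_hom (tens_alg X) A" "G \<in> ring_hom (tens_alg X) A"
    using F G by (simp_all add: kalg_hom_def)
  have on_words: "F (word u) = G (word u)" if "set u \<subseteq> letters X" for u
    using that
  proof (induction u)
    case Nil
    then show ?case using hom[THEN ring_hom_one] by (simp add: tens_alg_simps)
  next
    case (Cons a u)
    then show ?case
      using hom[THEN ring_hom_mult, of "letter a" "word u"] on_letters
      by (simp add: word_Cons tens_alg_simps tens_closed)
  qed
  from f show ?thesis
  proof (induction rule: tens_carrier_induct)
    case zero
    then show ?case
      using hom[THEN ring_hom_zero, OF ring_tens_alg ring_axioms] by (simp add: tens_alg_simps)
  next
    case (step g c u)
    have "(\<lambda>v. g v + c * word u v) = g \<oplus>\<^bsub>tens_alg X\<^esub> tens_smult c (word u)"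
      by (simp add: tens_alg_simps tens_smult_def)
    with step F G hom[THEN ring_hom_add] on_words show ?case
      by (simp add: kalg_hom_def tens_alg_simps tens_smult_def tens_closed)
  qed
qed

end

section \<open>The quotient algebra\<close>

definition inv_ideal_gens :: "'x set \<Rightarrow> ('x option list \<Rightarrow> 'k::field) set" where
  "inv_ideal_gens X =
     {letter None \<otimes>\<^bsub>tens_alg X\<^esub> letter None \<ominus>\<^bsub>tens_alg X\<^esub> letter None} \<union>
     {letter None \<otimes>\<^bsub>tens_alg X\<^esub> a \<otimes>\<^bsub>tens_alg X\<^esub> letter None
        \<ominus>\<^bsub>tens_alg X\<^esub> letter None \<otimes>\<^bsub>tens_alg X\<^esub> a | a. a \<in> carrier (tens_alg X)}"

lemma inv_ideal_eq_genideal: "inv_ideal X = genideal (tens_alg X) (inv_ideal_gens X)"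
  by (simp add: inv_ideal_def inv_ideal_gens_def)

lemma inv_ideal_gens_closed: "inv_ideal_gens X \<subseteq> carrier (tens_alg X)"
proof -
  interpret ring "tens_alg X" by (rule ring_tens_alg)
  have "letter None \<in> carrier (tens_alg X)"
    by (simp add: tens_alg_simps letter_closed)
  then show ?thesis by (auto simp: inv_ideal_gens_def)
qed

lemma ideal_inv_ideal: "ideal (inv_ideal X) (tens_alg X)"
  unfolding inv_ideal_eq_genideal
  by (rule ring.genideal_ideal[OF ring_tens_alg inv_ideal_gens_closed])

lemma inv_ideal_gens_subset: "inv_ideal_gens X \<subseteq> inv_ideal X"
  unfolding inv_ideal_eq_genideal
  by (rule ring.genideal_self[OF ring_tens_alg inv_ideal_gens_closed])

abbreviation proj :: "'x set \<Rightarrow> ('x option list \<Rightarrow> 'k::field) \<Rightarrow> ('x option list \<Rightarrow> 'k) set" where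
  "proj X a \<equiv> inv_ideal X +>\<^bsub>tens_alg X\<^esub> a"

lemma ring_hatA: "ring (hatA X)"
  unfolding hatA_def by (rule ideal.quotient_is_ring[OF ideal_inv_ideal])

lemma proj_ring_hom: "proj X \<in> ring_hom (tens_alg X) (hatA X)"
  unfolding hatA_def by (rule ideal.rcos_ring_hom[OF ideal_inv_ideal])

lemma proj_closed: "a \<in> tens_carrier X \<Longrightarrow> proj X a \<in> carrier (hatA X)"
  using ring_hom_closed[OF proj_ring_hom] by (simp add: tens_alg_simps)

lemma proj_add:
  "a \<in> tens_carrier X \<Longrightarrow> b \<in> tens_carrier X \<Longrightarrow>
   proj X a \<oplus>\<^bsub>hatA X\<^esub> proj X b = proj X (\<lambda>w. a w + b w)"
  using ring_hom_add[OF proj_ring_hom, of a X b] by (simp add: tens_alg_simps)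

lemma proj_mult:
  "a \<in> tens_carrier X \<Longrightarrow> b \<in> tens_carrier X \<Longrightarrow>
   proj X a \<otimes>\<^bsub>hatA X\<^esub> proj X b = proj X (conv a b)"
  using ring_hom_mult[OF proj_ring_hom, of a X b] by (simp add: tens_alg_simps)

lemma proj_one: "proj X (word []) = \<one>\<^bsub>hatA X\<^esub>"
  using ring_hom_one[OF proj_ring_hom] by (simp add: tens_alg_simps)

lemma hatA_carrierE:
  assumes "C \<in> carrier (hatA X)"
  obtains a where "a \<in> tens_carrier X" "C = proj X a"
  using assms by (auto simp: hatA_def FactRing_def A_RCOSETS_def' tens_alg_simps)

lemma proj_eqI:
  assumes "a \<in> tens_carrier X" "b \<in> tens_carrier X" "(\<lambda>w. a w - b w) \<in> inv_ideal X"
  shows "proj X a = proj X b"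
proof -
  interpret I: ideal "inv_ideal X" "tens_alg X" by (rule ideal_inv_ideal)
  have "a = (\<lambda>w. a w - b w) \<oplus>\<^bsub>tens_alg X\<^esub> b"
    by (simp add: tens_alg_simps)
  with assms have "a \<in> proj X b"
    by (auto simp: a_r_coset_def')
  with assms show ?thesis
    using I.a_repr_independence[of a "inv_ideal X" b] I.a_subgroup by (auto simp: tens_alg_simps)
qed

lemma inv_ideal_smult_closed: "h \<in> inv_ideal X \<Longrightarrow> (\<lambda>w. c * h w) \<in> inv_ideal X"
proof -
  assume h: "h \<in> inv_ideal X"
  interpret I: ideal "inv_ideal X" "tens_alg X" by (rule ideal_inv_ideal)
  have "(\<lambda>w. c * word [] w) \<in> tens_carrier X"
    by (simp add: tens_closed)
  then have "conv (\<lambda>w. c * word [] w) h \<in> inv_ideal X"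
    using I.I_l_closed[OF h] by (simp add: tens_alg_simps)
  then show ?thesis by (simp add: conv_smult_left)
qed

lemma hat_smult_proj:
  assumes a: "a \<in> tens_carrier X"
  shows "hat_smult X c (proj X a) = proj X (\<lambda>w. c * a w)"
proof -
  interpret I: ideal "inv_ideal X" "tens_alg X" by (rule ideal_inv_ideal)
  have "a \<in> proj X a"
    using I.a_rcos_self a by (simp add: tens_alg_simps)
  then have "(SOME b. b \<in> proj X a) \<in> proj X a"
    by (metis someI)
  then obtain h where h: "h \<in> inv_ideal X" and rep: "(SOME b. b \<in> proj X a) = h \<oplus>\<^bsub>tens_alg X\<^esub> a"
    by (auto simp: a_r_coset_def')
  have "h \<in> tens_carrier X"
    using h I.a_subset by (auto simp: tens_alg_simps)
  then have "proj X (\<lambda>w. c * h w + c * a w) = proj X (\<lambda>w. c * a w)"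
    using a h by (intro proj_eqI) (auto intro!: tens_closed inv_ideal_smult_closed)
  then show ?thesis
    by (simp add: hat_smult_def rep tens_smult_def tens_alg_simps distrib_left)
qed

lemma proj_kalg_hom: "kalg_hom (tens_alg X) tens_smult (hatA X) (hat_smult X) (proj X)"
  using proj_ring_hom by (simp add: kalg_hom_def hat_smult_proj tens_alg_simps tens_smult_def)


lemma kalg_hatA:
  fixes X :: "'x set"
  shows "kalg (hatA X :: ('x option list \<Rightarrow> 'k::field) set ring) (hat_smult X)"
  unfolding kalg_def
proof (intro conjI allI ballI)
  show "ring (hatA X)" by (rule ring_hatA)
next
  fix c :: 'k and x :: "('x option list \<Rightarrow> 'k) set" assume "x \<in> carrier (hatA X)"
  then obtain a where a: "a \<in> tens_carrier X" "x = proj X a"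
    by (rule hatA_carrierE)
  show "hat_smult X c x \<in> carrier (hatA X)" "hat_smult X 1 x = x"
    using a by (simp_all add: hat_smult_proj proj_closed tens_closed)
  fix d
  show "hat_smult X (c + d) x = hat_smult X c x \<oplus>\<^bsub>hatA X\<^esub> hat_smult X d x"
    using a by (simp add: hat_smult_proj proj_add tens_closed distrib_right)
  show "hat_smult X (c * d) x = hat_smult X c (hat_smult X d x)"
    using a by (simp add: hat_smult_proj tens_closed mult.assoc)
next
  fix c :: 'k and x y :: "('x option list \<Rightarrow> 'k) set" assume "x \<in> carrier (hatA X)" "y \<in> carrier (hatA X)"
  then obtain a b where a: "a \<in> tens_carrier X" "x = proj X a" and b: "b \<in> tens_carrier X" "y = proj X b"
    by (metis hatA_carrierE)
  show "hat_smult X c (x \<oplus>\<^bsub>hatA X\<^esub> y) = hat_smult X c x \<oplus>\<^bsub>hatA X\<^esub> hat_smult X c y"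
    using a b by (simp add: hat_smult_proj proj_add tens_closed distrib_left)
  show "hat_smult X c (x \<otimes>\<^bsub>hatA X\<^esub> y) = hat_smult X c x \<otimes>\<^bsub>hatA X\<^esub> y"
    and "hat_smult X c (x \<otimes>\<^bsub>hatA X\<^esub> y) = x \<otimes>\<^bsub>hatA X\<^esub> hat_smult X c y"
    using a b by (simp_all add: hat_smult_proj proj_mult tens_closed conv_smult_left conv_smult_right)
qed

lemma hat_q_invariant:
  assumes "x \<in> carrier (hatA X)"
  shows "hat_q X \<otimes>\<^bsub>hatA X\<^esub> x \<otimes>\<^bsub>hatA X\<^esub> hat_q X = hat_q X \<otimes>\<^bsub>hatA X\<^esub> x"
proof -
  obtain a where a: "a \<in> tens_carrier X" "x = proj X a"
    using assms by (rule hatA_carrierE)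
  have q: "letter None \<in> tens_carrier X"
    by (simp add: letter_closed)
  have "conv (conv (letter None) a) (letter None) \<ominus>\<^bsub>tens_alg X\<^esub> conv (letter None) a \<in> inv_ideal X"
    using a inv_ideal_gens_subset by (auto simp: inv_ideal_gens_def tens_alg_simps)
  then have "proj X (conv (conv (letter None) a) (letter None)) = proj X (conv (letter None) a)"
    using a q by (intro proj_eqI) (simp_all add: tens_alg_diff tens_closed)
  with a q show ?thesis
    by (simp add: hat_q_def proj_mult tens_closed)
qed

lemma inv_carrier_hatA: "inv_carrier (hatA X) (hat_q X) = carrier (hatA X)"
  using hat_q_invariant unfolding inv_carrier_def by blast

lemma inv_alg_hatA:
  fixes X :: "'x set"
  shows "inv_alg (hatA X :: ('x option list \<Rightarrow> 'k::field) set ring) (hat_smult X) (hat_q X)"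
proof -
  have q: "letter None \<in> (tens_carrier X :: ('x option list \<Rightarrow> 'k) set)"
    by (simp add: letter_closed)
  have "conv (letter None) (letter None) \<ominus>\<^bsub>tens_alg X\<^esub> letter None \<in> inv_ideal X"
    using inv_ideal_gens_subset by (auto simp: inv_ideal_gens_def tens_alg_simps)
  then have "proj X (conv (letter None) (letter None)) = proj X (letter None)"
    using q by (intro proj_eqI) (simp_all add: tens_alg_diff tens_closed)
  with q show ?thesis
    by (simp add: inv_alg_def kalg_hatA hat_q_def proj_closed proj_mult)
qed

lemma hat_i_in_inv_carrier: "hat_i X \<in> X \<rightarrow> inv_carrier (hatA X) (hat_q X)"
  by (auto simp: inv_carrier_hatA hat_i_def intro!: proj_closed letter_closed)

lemma inv_hom_iff_kalg_hom:
  assumes "inv_carrier A qA = carrier A"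
  shows "inv_hom A sA qA B sB qB \<phi> \<longleftrightarrow>
    kalg_hom A sA B sB \<phi> \<and> \<phi> \<in> carrier A \<rightarrow> inv_carrier B qB \<and> \<phi> qA = qB"
  using assms unfolding inv_hom_def kalg_hom_def ring_hom_def
  by (auto simp: inv_carrier_def Pi_iff)

lemma (in kalgebra) hatA_hom_eqI:
  assumes F: "inv_hom (hatA X) (hat_smult X) (hat_q X) A s q F"
    and G: "inv_hom (hatA X) (hat_smult X) (hat_q X) A s q G"
    and on_gens: "\<forall>x\<in>X. F (hat_i X x) = G (hat_i X x)"
    and C: "C \<in> carrier (hatA X)"
  shows "F C = G C"
proof -
  have hom: "kalg_hom (hatA X) (hat_smult X) A s F" "kalg_hom (hatA X) (hat_smult X) A s G"
    and q: "F (hat_q X) = q" "G (hat_q X) = q"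
    using F G by (simp_all add: inv_hom_iff_kalg_hom inv_carrier_hatA)
  have on_letters: "(F \<circ> proj X) (letter a) = (G \<circ> proj X) (letter a)" if "a \<in> letters X" for a
    using that q on_gens by (auto simp: hat_q_def hat_i_def)
  obtain a where a: "a \<in> tens_carrier X" "C = proj X a"
    using C by (rule hatA_carrierE)
  have "(F \<circ> proj X) a = (G \<circ> proj X) a"
    using hom[THEN kalg_hom_comp[OF proj_kalg_hom]] on_letters a(1) by (rule tens_alg_hom_eqI)
  with a show ?thesis by simp
qed

section \<open>Evaluation of words\<close>

context kalgebra
begin

definition word_val :: "('x \<Rightarrow> 'a) \<Rightarrow> 'x list \<Rightarrow> 'a" where
  "word_val v w = foldr (\<lambda>a r. v a \<otimes> r) w \<one>"

definition eval :: "('x \<Rightarrow> 'a) \<Rightarrow> ('x list \<Rightarrow> 'k) \<Rightarrow> 'a" where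
  "eval v f = (\<Oplus>w\<in>supp f. s (f w) (word_val v w))"

lemma word_val_Nil [simp]: "word_val v [] = \<one>"
  by (simp add: word_val_def)

lemma word_val_Cons [simp]: "word_val v (a # w) = v a \<otimes> word_val v w"
  by (simp add: word_val_def)

context
  fixes v :: "'x option \<Rightarrow> 'a" and X :: "'x set"
  assumes v_closed: "\<And>a. v a \<in> carrier A"
begin

lemma word_val_closed [simp]: "word_val v w \<in> carrier A"
  by (induction w) (simp_all add: v_closed)

lemma word_val_append: "word_val v (u @ w) = word_val v u \<otimes> word_val v w"
  by (induction u) (simp_all add: v_closed m_assoc)

lemma eval_eq_finsum:
  assumes "finite S" "supp f \<subseteq> S"
  shows "eval v f = (\<Oplus>w\<in>S. s (f w) (word_val v w))"
  unfolding eval_def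
  by (rule add.finprod_mono_neutral_cong_left) (use assms in \<open>auto simp: supp_def\<close>)

lemma eval_closed [simp]: "eval v f \<in> carrier A"
  by (simp add: eval_def)

lemma eval_add:
  assumes "f \<in> tens_carrier X" "g \<in> tens_carrier X"
  shows "eval v (\<lambda>w. f w + g w) = eval v f \<oplus> eval v g"
proof -
  let ?S = "supp f \<union> supp g"
  have S: "finite ?S"
    using assms by (simp add: tens_carrier_iff)
  have "eval v (\<lambda>w. f w + g w) = (\<Oplus>w\<in>?S. s (f w) (word_val v w) \<oplus> s (g w) (word_val v w))"
    by (simp add: eval_eq_finsum[OF S supp_add] scalar_add_left)
  also have "\<dots> = eval v f \<oplus> eval v g"
    by (simp add: finsum_addf eval_eq_finsum[OF S])
  finally show ?thesis .
qed

lemma eval_smult: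
  assumes "f \<in> tens_carrier X"
  shows "eval v (\<lambda>w. c * f w) = s c (eval v f)"
proof -
  have S: "finite (supp f)"
    using assms by (simp add: tens_carrier_iff)
  have "supp (\<lambda>w. c * f w) \<subseteq> supp f"
    by (auto simp: supp_def)
  then have "eval v (\<lambda>w. c * f w) = (\<Oplus>w\<in>supp f. s (c * f w) (word_val v w))"
    by (rule eval_eq_finsum[OF S])
  also have "\<dots> = (\<Oplus>w\<in>supp f. s c (s (f w) (word_val v w)))"
    by (simp add: scalar_scalar)
  also have "\<dots> = s c (eval v f)"
    by (simp add: eval_def scalar_finsum)
  finally show ?thesis .
qed

lemma eval_word: "eval v (word u) = word_val v u"
proof -
  have "eval v (word u) = (\<Oplus>w\<in>{u}. s (word u w) (word_val v w))"
    by (rule eval_eq_finsum) (auto simp: supp_def word_def)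
  then show ?thesis by (simp add: word_def)
qed

lemma eval_zero: "eval v (\<lambda>w. 0) = \<zero>"
  by (simp add: eval_def supp_def)

lemma eval_add_word:
  assumes "g \<in> tens_carrier X" "set u \<subseteq> letters X"
  shows "eval v (\<lambda>w. g w + c * word u w) = eval v g \<oplus> s c (word_val v u)"
  using assms by (simp add: eval_add eval_smult eval_word tens_closed)

lemma eval_conv_word:
  assumes "set u \<subseteq> letters X" "g \<in> tens_carrier X"
  shows "eval v (conv (word u) g) = word_val v u \<otimes> eval v g"
  using assms(2)
proof (induction rule: tens_carrier_induct)
  case zero
  then show ?case by (simp add: eval_zero)
next
  case (step g c w)
  have "conv (word u) (\<lambda>v. g v + c * word w v) = (\<lambda>v. conv (word u) g v + c * word (u @ w) v)"
    by (simp add: conv_add_right conv_smult_right conv_word)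
  with step assms show ?case
    by (simp add: eval_add_word eval_add eval_smult eval_word tens_closed word_val_append
        r_distr scalar_mult_right)
qed

lemma eval_conv:
  assumes "f \<in> tens_carrier X" "g \<in> tens_carrier X"
  shows "eval v (conv f g) = eval v f \<otimes> eval v g"
  using assms(1)
proof (induction rule: tens_carrier_induct)
  case zero
  then show ?case by (simp add: eval_zero)
next
  case (step f c u)
  have "conv (\<lambda>v. f v + c * word u v) g = (\<lambda>v. conv f g v + c * conv (word u) g v)"
    by (simp add: conv_add_left conv_smult_left)
  with step assms show ?case
    by (simp add: eval_add_word eval_add eval_smult eval_conv_word tens_closed
        l_distr scalar_mult_left)
qed

lemma eval_kalg_hom: "kalg_hom (tens_alg X) tens_smult A s (eval v)"
  unfolding kalg_hom_def
  by (auto intro!: ring_hom_memI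
      simp: tens_alg_simps tens_smult_def eval_add eval_conv eval_smult eval_word)

lemma eval_letter: "eval v (letter a) = v a"
  by (simp add: letter_eq_word eval_word v_closed)

end

end

definition quot_lift :: "('b \<Rightarrow> 'a) \<Rightarrow> 'b set \<Rightarrow> 'a" where
  "quot_lift F C = F (SOME a. a \<in> C)"

context kalgebra
begin

lemma quot_lift_proj:
  assumes F: "F \<in> ring_hom (tens_alg X) A"
    and kernel: "inv_ideal X \<subseteq> a_kernel (tens_alg X) A F"
    and a: "a \<in> tens_carrier X"
  shows "quot_lift F (proj X a) = F a"
proof -
  interpret I: ideal "inv_ideal X" "tens_alg X" by (rule ideal_inv_ideal)
  have "a \<in> proj X a"
    using I.a_rcos_self a by (simp add: tens_alg_simps)
  then have "(SOME b. b \<in> proj X a) \<in> proj X a"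
    by (metis someI)
  then obtain h where h: "h \<in> inv_ideal X" and rep: "(SOME b. b \<in> proj X a) = h \<oplus>\<^bsub>tens_alg X\<^esub> a"
    by (auto simp: a_r_coset_def')
  have "h \<in> carrier (tens_alg X)" "F h = \<zero>"
    using h kernel by (auto simp: a_kernel_def')
  moreover have "F (h \<oplus>\<^bsub>tens_alg X\<^esub> a) = F h \<oplus> F a"
    using a \<open>h \<in> carrier (tens_alg X)\<close> by (intro ring_hom_add[OF F]) (simp_all add: tens_alg_simps)
  ultimately have "F (h \<oplus>\<^bsub>tens_alg X\<^esub> a) = F a"
    using F a by (simp add: ring_hom_closed tens_alg_simps)
  then show ?thesis
    by (simp add: quot_lift_def rep)
qed

lemma kalg_hom_quot_lift:
  fixes X :: "'x set" and F :: "('x option list \<Rightarrow> 'k) \<Rightarrow> 'a"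
  assumes F: "kalg_hom (tens_alg X) tens_smult A s F"
    and kernel: "inv_ideal X \<subseteq> a_kernel (tens_alg X) A F"
  shows "kalg_hom (hatA X) (hat_smult X) A s (quot_lift F)"
proof -
  have hom: "F \<in> ring_hom (tens_alg X) A"
    using F by (simp add: kalg_hom_def)
  have lift: "quot_lift F (proj X a) = F a" if "a \<in> tens_carrier X" for a
    by (rule quot_lift_proj[OF hom kernel that])
  show ?thesis
    unfolding kalg_hom_def
  proof (intro conjI ring_hom_memI allI ballI)
    fix C :: "('x option list \<Rightarrow> 'k) set" assume "C \<in> carrier (hatA X)"
    then obtain a where a: "a \<in> tens_carrier X" "C = proj X a"
      by (rule hatA_carrierE)
    show "quot_lift F C \<in> carrier A"
      using a hom ring_hom_closed by (fastforce simp: lift tens_alg_simps)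
    fix c
    show "quot_lift F (hat_smult X c C) = s c (quot_lift F C)"
      using a F by (simp add: hat_smult_proj lift tens_closed kalg_hom_def tens_alg_simps tens_smult_def)
  next
    fix C D :: "('x option list \<Rightarrow> 'k) set" assume "C \<in> carrier (hatA X)" "D \<in> carrier (hatA X)"
    then obtain a b where a: "a \<in> tens_carrier X" "C = proj X a" and b: "b \<in> tens_carrier X" "D = proj X b"
      by (metis hatA_carrierE)
    have "F (conv a b) = F a \<otimes> F b" "F (\<lambda>w. a w + b w) = F a \<oplus> F b"
      using ring_hom_mult[OF hom, of a b] ring_hom_add[OF hom, of a b] a b by (simp_all add: tens_alg_simps)
    with a b show "quot_lift F (C \<otimes>\<^bsub>hatA X\<^esub> D) = quot_lift F C \<otimes> quot_lift F D"
      and "quot_lift F (C \<oplus>\<^bsub>hatA X\<^esub> D) = quot_lift F C \<oplus> quot_lift F D"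
      by (simp_all add: proj_mult proj_add lift tens_closed)
  next
    show "quot_lift F \<one>\<^bsub>hatA X\<^esub> = \<one>"
      using ring_hom_one[OF hom] by (simp add: proj_one[symmetric] lift tens_closed tens_alg_simps)
  qed
qed

end


section \<open>Invariant algebras and the universal property\<close>

locale invariant_algebra = kalgebra A s
  for A :: "('a, 'm) ring_scheme" (structure) and s :: "'k::field \<Rightarrow> 'a \<Rightarrow> 'a" +
  fixes q :: 'a
  assumes q_closed: "q \<in> carrier A" and q_idem: "q \<otimes> q = q"

lemma invariant_algebraI: "inv_alg A s q \<Longrightarrow> invariant_algebra A s q"
  by (simp add: inv_alg_def invariant_algebra_def invariant_algebra_axioms_def kalgebra_def)

context invariant_algebra
begin

lemma inv_carrier_closed: "x \<in> inv_carrier A q \<Longrightarrow> x \<in> carrier A"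
  by (simp add: inv_carrier_def)

lemma one_in_inv_carrier: "\<one> \<in> inv_carrier A q"
  using q_closed q_idem by (simp add: inv_carrier_def)

lemma zero_in_inv_carrier: "\<zero> \<in> inv_carrier A q"
  using q_closed by (simp add: inv_carrier_def)

lemma q_in_inv_carrier: "q \<in> inv_carrier A q"
  using q_closed q_idem by (simp add: inv_carrier_def)

lemma inv_carrier_add: "x \<in> inv_carrier A q \<Longrightarrow> y \<in> inv_carrier A q \<Longrightarrow> x \<oplus> y \<in> inv_carrier A q"
  using q_closed by (simp add: inv_carrier_def l_distr r_distr)

lemma inv_carrier_mult:
  assumes x: "x \<in> inv_carrier A q" and y: "y \<in> inv_carrier A q"
  shows "x \<otimes> y \<in> inv_carrier A q"
proof -
  have xy: "x \<in> carrier A" "y \<in> carrier A" and qx: "q \<otimes> x \<otimes> q = q \<otimes> x" and qy: "q \<otimes> y \<otimes> q = q \<otimes> y"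
    using x y by (auto simp: inv_carrier_def)
  have "q \<otimes> (x \<otimes> y) \<otimes> q = (q \<otimes> x) \<otimes> (y \<otimes> q)"
    using xy q_closed by (simp add: m_assoc)
  also have "\<dots> = (q \<otimes> x \<otimes> q) \<otimes> (y \<otimes> q)"
    by (simp only: qx)
  also have "\<dots> = (q \<otimes> x) \<otimes> (q \<otimes> y \<otimes> q)"
    using xy q_closed by (simp add: m_assoc)
  also have "\<dots> = (q \<otimes> x \<otimes> q) \<otimes> y"
    unfolding qy using xy q_closed by (simp add: m_assoc)
  also have "\<dots> = q \<otimes> (x \<otimes> y)"
    unfolding qx using xy q_closed by (simp add: m_assoc)
  finally show ?thesis
    using xy by (simp add: inv_carrier_def)
qed

lemma inv_carrier_scalar:
  assumes "x \<in> inv_carrier A q"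
  shows "s c x \<in> inv_carrier A q"
proof -
  have x: "x \<in> carrier A" and qx: "q \<otimes> x \<otimes> q = q \<otimes> x"
    using assms by (auto simp: inv_carrier_def)
  have "q \<otimes> s c x \<otimes> q = s c (q \<otimes> x \<otimes> q)"
    using x q_closed by (simp add: scalar_mult_left[of "q \<otimes> x" q] scalar_mult_right[of q x])
  also have "\<dots> = q \<otimes> s c x"
    using x q_closed by (simp add: qx scalar_mult_right[of q x])
  finally show ?thesis
    using x by (simp add: inv_carrier_def)
qed

lemma eval_in_inv_carrier:
  assumes v: "\<And>a. v a \<in> inv_carrier A q" and f: "f \<in> tens_carrier X"
  shows "eval v f \<in> inv_carrier A q"
proof -
  have v_closed: "\<And>a. v a \<in> carrier A"
    using v inv_carrier_closed by blast
  have word_val: "word_val v u \<in> inv_carrier A q" for u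
    by (induction u) (simp_all add: one_in_inv_carrier inv_carrier_mult v)
  from f show ?thesis
    by (induction rule: tens_carrier_induct)
      (simp_all add: eval_zero eval_add_word v_closed zero_in_inv_carrier inv_carrier_add
        inv_carrier_scalar word_val)
qed

lemma inv_ideal_subset_kernel:
  fixes F :: "('x option list \<Rightarrow> 'k) \<Rightarrow> 'a"
  assumes F: "F \<in> ring_hom (tens_alg X) A"
    and F_q: "F (letter None) = q"
    and F_inv: "\<And>f. f \<in> tens_carrier X \<Longrightarrow> F f \<in> inv_carrier A q"
  shows "inv_ideal X \<subseteq> a_kernel (tens_alg X) A F"
proof -
  interpret H: ring_hom_ring "tens_alg X" A F
    by (rule ring_hom_ringI2[OF ring_tens_alg ring_axioms F])
  have l: "letter None \<in> carrier (tens_alg X :: ('x option list \<Rightarrow> 'k) ring)"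
    by (simp add: tens_alg_simps letter_closed)
  have F_diff: "F (x \<ominus>\<^bsub>tens_alg X\<^esub> y) = F x \<ominus> F y"
    if "x \<in> carrier (tens_alg X)" "y \<in> carrier (tens_alg X)" for x y
    using that by (simp add: a_minus_def)
  have gens_zero: "F g = \<zero>" if "g \<in> inv_ideal_gens X" for g
  proof (cases rule: UnE[OF that[unfolded inv_ideal_gens_def]])
    case 1
    then show ?thesis
      using l q_closed by (simp add: F_diff F_q q_idem a_minus_def r_neg)
  next
    case 2
    then obtain a where a: "a \<in> carrier (tens_alg X)"
      and g: "g = letter None \<otimes>\<^bsub>tens_alg X\<^esub> a \<otimes>\<^bsub>tens_alg X\<^esub> letter None
        \<ominus>\<^bsub>tens_alg X\<^esub> letter None \<otimes>\<^bsub>tens_alg X\<^esub> a"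
      by blast
    have qFa: "q \<otimes> F a \<otimes> q = q \<otimes> F a"
      using F_inv a by (simp add: inv_carrier_def tens_alg_simps)
    have "F g = q \<otimes> F a \<otimes> q \<ominus> q \<otimes> F a"
      using a l by (simp add: g F_diff F_q)
    also have "\<dots> = \<zero>"
      unfolding qFa a_minus_def using a q_closed by (intro r_neg) simp
    finally show ?thesis .
  qed
  have "inv_ideal_gens X \<subseteq> a_kernel (tens_alg X) A F"
    unfolding a_kernel_def' using gens_zero inv_ideal_gens_closed by blast
  then show ?thesis
    unfolding inv_ideal_eq_genideal by (rule H.R.genideal_minimal[OF H.kernel_is_ideal])
qed

text \<open>Letters outside \<open>X\<close> get the junk value \<open>\<zero>\<close>; they never occur in \<open>tens_carrier X\<close>.\<close>

definition letter_val :: "'x set \<Rightarrow> ('x \<Rightarrow> 'a) \<Rightarrow> 'x option \<Rightarrow> 'a" where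
  "letter_val X \<theta> a = (case a of None \<Rightarrow> q | Some x \<Rightarrow> if x \<in> X then \<theta> x else \<zero>)"

lemma free_inv_hom:
  fixes X :: "'x set"
  assumes \<theta>: "\<theta> \<in> X \<rightarrow> inv_carrier A q"
  shows "inv_hom (hatA X) (hat_smult X) (hat_q X) A s q (quot_lift (eval (letter_val X \<theta>)))"
    and "x \<in> X \<Longrightarrow> quot_lift (eval (letter_val X \<theta>)) (hat_i X x) = \<theta> x"
proof -
  let ?v = "letter_val X \<theta>"
  have v: "?v a \<in> inv_carrier A q" for a
    using \<theta> by (auto simp: letter_val_def q_in_inv_carrier zero_in_inv_carrier split: option.splits)
  then have v_closed: "?v a \<in> carrier A" for a
    by (rule inv_carrier_closed)
  have hom: "kalg_hom (tens_alg X) tens_smult A s (eval ?v)"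
    by (rule eval_kalg_hom[OF v_closed])
  have eval_letter: "eval ?v (letter a) = ?v a" for a
    by (rule eval_letter[OF v_closed])
  have kernel: "inv_ideal X \<subseteq> a_kernel (tens_alg X) A (eval ?v)"
    using hom v by (intro inv_ideal_subset_kernel)
      (simp_all add: kalg_hom_def eval_letter letter_val_def eval_in_inv_carrier tens_alg_simps)
  have lift: "quot_lift (eval ?v) (proj X a) = eval ?v a" if "a \<in> tens_carrier X" for a
    using hom kernel that by (intro quot_lift_proj) (simp_all add: kalg_hom_def)
  have "quot_lift (eval ?v) C \<in> inv_carrier A q" if "C \<in> carrier (hatA X)" for C
    using that by (auto elim!: hatA_carrierE simp: lift eval_in_inv_carrier v)
  moreover have "quot_lift (eval ?v) (hat_q X) = q"
    by (simp add: hat_q_def lift letter_closed eval_letter letter_val_def)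
  ultimately show "inv_hom (hatA X) (hat_smult X) (hat_q X) A s q (quot_lift (eval ?v))"
    by (simp add: inv_hom_iff_kalg_hom inv_carrier_hatA kalg_hom_quot_lift[OF hom kernel])
  show "x \<in> X \<Longrightarrow> quot_lift (eval ?v) (hat_i X x) = \<theta> x"
    by (simp add: hat_i_def lift letter_closed eval_letter letter_val_def)
qed

end

theorem proposition2p1:
  fixes X :: "'x set"
    and A :: "('a, 'm) ring_scheme" and s :: "'k::field \<Rightarrow> 'a \<Rightarrow> 'a" and q :: 'a
    and \<theta> :: "'x \<Rightarrow> 'a"
  assumes "inv_alg A s q"
    and "\<theta> \<in> X \<rightarrow> inv_carrier A q"
  shows "inv_alg (hatA X) (hat_smult X) (hat_q X :: ('x option list \<Rightarrow> 'k) set)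
         \<and> hat_i X \<in> X \<rightarrow> inv_carrier (hatA X) (hat_q X :: ('x option list \<Rightarrow> 'k) set)
         \<and> (\<exists>\<phi>. inv_hom (hatA X) (hat_smult X) (hat_q X) A s q \<phi>
               \<and> (\<forall>x\<in>X. \<phi> (hat_i X x) = \<theta> x)
               \<and> (\<forall>\<psi>. inv_hom (hatA X) (hat_smult X) (hat_q X) A s q \<psi>
                      \<and> (\<forall>x\<in>X. \<psi> (hat_i X x) = \<theta> x)
                      \<longrightarrow> (\<forall>a\<in>inv_carrier (hatA X) (hat_q X). \<psi> a = \<phi> a)))"
proof -
  interpret invariant_algebra A s q
    using assms(1) by (rule invariant_algebraI)
  let ?\<phi> = "quot_lift (eval (letter_val X \<theta>)) :: ('x option list \<Rightarrow> 'k) set \<Rightarrow> 'a"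
  have \<phi>: "inv_hom (hatA X) (hat_smult X) (hat_q X) A s q ?\<phi>" "\<forall>x\<in>X. ?\<phi> (hat_i X x) = \<theta> x"
    using free_inv_hom[OF assms(2)] by auto
  show ?thesis
  proof (intro conjI exI[of _ ?\<phi>] allI impI ballI)
    fix \<psi> :: "('x option list \<Rightarrow> 'k) set \<Rightarrow> 'a" and a :: "('x option list \<Rightarrow> 'k) set"
    assume "inv_hom (hatA X) (hat_smult X) (hat_q X) A s q \<psi> \<and> (\<forall>x\<in>X. \<psi> (hat_i X x) = \<theta> x)"
      and "a \<in> inv_carrier (hatA X) (hat_q X)"
    with \<phi> show "\<psi> a = ?\<phi> a"
      by (intro hatA_hom_eqI) (simp_all add: inv_carrier_hatA)
  qed (simp_all add: \<phi> inv_alg_hatA hat_i_in_inv_carrier)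
qed

end
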